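(* Let $(T,[\cdot,\cdot],[\cdot,\cdot,\cdot],\alpha)$ be a Hom-Lie-Yamaguti algebra and $(\rho,D,\theta)$ a representation of it on a Hom-vector space $(V,\beta)$. Then every (2,3)-coboundary is a (2,3)-cocycle, i.e. $B^2(T,V)\times B^3(T,V)\subseteq Z^2(T,V)\times Z^3(T,V)$.
   Context: Throughout, vector spaces are over an algebraically closed field $\mathbb{K}$ of characteristic different from 2 and 3. A Hom-vector space is a pair $(V,\beta)$ with $\beta:V\to V$ linear. A Hom-Lie-Yamaguti algebra (HLYA) is a vector space $T$ with a linear map $\alpha:T\to T$, a bilinear map $[\cdot,\cdot]$ and a trilinear map $[\cdot,\cdot,\cdot]$ on $T$ such that for all $x_i,y_i\in T$: (HLY01) $\alpha([x_1,x_2])=[\alpha(x_1),\alpha(x_2)]$; (HLY02) $\alpha([x_1,x_2,x_3])=[\alpha(x_1),\alpha(x_2),\alpha(x_3)]$; (HLY1) $[x_1,x_2]+[x_2,x_1]=0$; (HLY2) $[x_1,x_2,x_3]+[x_2,x_1,x_3]=0$; (HLY3) $\sum_{\mathrm{cyc}(x_1,x_2,x_3)}([[x_1,x_2],\alpha(x_3)]+[x_1,x_2,x_3])=0$; (HLY4) $[[x_1,x_2],\alpha(x_3),\alpha(y_1)]+[[x_2,x_3],\alpha(x_1),\alpha(y_1)]+[[x_3,x_1],\alpha(x_2),\alpha(y_1)]=0$; (HLY5) $[\alpha(x_1),\alpha(x_2),[y_1,y_2]]=[[x_1,x_2,y_1],\alpha^2(y_2)]+[\alpha^2(y_1),[x_1,x_2,y_2]]$;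 (HLY6) $[\alpha^2(x_1),\alpha^2(x_2),[y_1,y_2,y_3]]=[[x_1,x_2,y_1],\alpha^2(y_2),\alpha^2(y_3)]+[\alpha^2(y_1),[x_1,x_2,y_2],\alpha^2(y_3)]+[\alpha^2(y_1),\alpha^2(y_2),[x_1,x_2,y_3]]$. A representation of $(T,\alpha)$ on $(V,\beta)$ is a linear map $\rho:T\to\mathrm{End}(V)$ and bilinear maps $D,\theta:T\times T\to\mathrm{End}(V)$ satisfying, for all $x_i,y_i\in T$: (HR01) $\rho(\alpha(x_1))\circ\beta=\beta\circ\rho(x_1)$; (HR02) $D(\alpha(x_1),\alpha(x_2))\circ\beta=\beta\circ D(x_1,x_2)$; (HR03) $\theta(\alpha(x_1),\alpha(x_2))\circ\beta=\beta\circ\theta(x_1,x_2)$; (HR31) $D(x_1,x_2)-\theta(x_2,x_1)+\theta(x_1,x_2)+\rho([x_1,x_2])\circ\beta-\rho(\alpha(x_1))\rho(x_2)+\rho(\alpha(x_2))\rho(x_1)=0$; (HR41) $D([x_1,x_2],\alpha(x_3))+D([x_2,x_3],\alpha(x_1))+D([x_3,x_1],\alpha(x_2))=0$; (HR42) $\theta([x_1,x_2],\alpha(y_1))\circ\beta=\theta(\alpha(x_1),\alpha(y_1))\rho(x_2)-\theta(\alpha(x_2),\alpha(y_1))\rho(x_1)$; (HR51) $D(\alpha(x_1),\alpha(x_2))\rho(y_2)=\rho(\alpha^2(y_2))D(x_1,x_2)+\rho([x_1,x_2,y_2])\circ\beta^2$; (HR52) $\theta(\alpha(x_1),[y_1,y_2])\circ\beta=\rho(\alpha^2(y_1))\theta(x_1,y_2)-\rho(\alpha^2(y_2))\theta(x_1,y_1)$;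 (HR61) $D(\alpha^2(x_1),\alpha^2(x_2))\theta(y_1,y_2)=\theta(\alpha^2(y_1),\alpha^2(y_2))D(x_1,x_2)+\theta([x_1,x_2,y_1],\alpha^2(y_2))\circ\beta^2+\theta(\alpha^2(y_1),[x_1,x_2,y_2])\circ\beta^2$; (HR62) $\theta(\alpha^2(x_1),[y_1,y_2,y_3])\circ\beta^2=\theta(\alpha^2(y_2),\alpha^2(y_3))\theta(x_1,y_1)-\theta(\alpha^2(y_1),\alpha^2(y_3))\theta(x_1,y_2)+D(\alpha^2(y_1),\alpha^2(y_2))\theta(x_1,y_3)$. $C^2(T,V)$ is the space of bilinear $\nu:T\times T\to V$ with $\nu(x_1,x_2)=-\nu(x_2,x_1)$ and (CC01) $\nu(\alpha(x_1),\alpha(x_2))=\beta(\nu(x_1,x_2))$. $C^3(T,V)$ is the space of trilinear $\omega:T^3\to V$ with $\omega(x_1,x_2,x_3)=-\omega(x_2,x_1,x_3)$ and (CC02) $\omega(\alpha(x_1),\alpha(x_2),\alpha(x_3))=\beta(\omega(x_1,x_2,x_3))$. A pair $(\nu,\omega)\in C^2(T,V)\times C^3(T,V)$ is a (2,3)-cocycle if for all $x_i,y_i\in T$: (CC1) $\sum_{\mathrm{cyc}(x_1,x_2,x_3)}\big(\omega(x_1,x_2,x_3)-\rho(\alpha(x_1))\nu(x_2,x_3)+\nu([x_1,x_2],\alpha(x_3))\big)=0$; (CC2) $\sum_{\mathrm{cyc}(x_1,x_2,x_3)}\big(\theta(\alpha(x_1),\alpha(y_1))\nu(x_2,x_3)+\omega([x_1,x_2],\alpha(x_3),\alpha(y_1))\big)=0$;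 (CC3) $\omega(\alpha(x_1),\alpha(x_2),[y_1,y_2])+D(\alpha(x_1),\alpha(x_2))\nu(y_1,y_2)=\nu([x_1,x_2,y_1],\alpha^2(y_2))+\nu(\alpha^2(y_1),[x_1,x_2,y_2])+\rho(\alpha^2(y_1))\omega(x_1,x_2,y_2)-\rho(\alpha^2(y_2))\omega(x_1,x_2,y_1)$; (CC4) $\omega(\alpha^2(x_1),\alpha^2(x_2),[y_1,y_2,y_3])+D(\alpha^2(x_1),\alpha^2(x_2))\omega(y_1,y_2,y_3)=\omega([x_1,x_2,y_1],\alpha^2(y_2),\alpha^2(y_3))+\omega(\alpha^2(y_1),[x_1,x_2,y_2],\alpha^2(y_3))+\omega(\alpha^2(y_1),\alpha^2(y_2),[x_1,x_2,y_3])+\theta(\alpha^2(y_2),\alpha^2(y_3))\omega(x_1,x_2,y_1)-\theta(\alpha^2(y_1),\alpha^2(y_3))\omega(x_1,x_2,y_2)+D(\alpha^2(y_1),\alpha^2(y_2))\omega(x_1,x_2,y_3)$. The space of (2,3)-cocycles is $Z^2(T,V)\times Z^3(T,V)$. A pair $(\nu,\omega)\in C^2(T,V)\times C^3(T,V)$ is a (2,3)-coboundary if there is a linear map $f:T\to V$ with (BB01) $f\circ\alpha=\beta\circ f$, (BB1) $\nu(x_1,x_2)=\rho(x_1)f(x_2)-\rho(x_2)f(x_1)-f([x_1,x_2])$, and (BB2) $\omega(x_1,x_2,x_3)=\theta(x_2,x_3)f(x_1)-\theta(x_1,x_3)f(x_2)+D(x_1,x_2)f(x_3)-f([x_1,x_2,x_3])$.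 The space of (2,3)-coboundaries is $B^2(T,V)\times B^3(T,V)$. *)

theory Defs
  imports "HOL-Computational_Algebra.Polynomial"
begin

definition alg_closed_field :: "'k::field itself \<Rightarrow> bool" where
  "alg_closed_field _ \<longleftrightarrow> (\<forall>p::'k poly. 0 < degree p \<longrightarrow> (\<exists>x. poly p x = 0))"

definition char_not_2_3 :: "'k::field itself \<Rightarrow> bool" where
  "char_not_2_3 _ \<longleftrightarrow> (2::'k) \<noteq> 0 \<and> (3::'k) \<noteq> 0"

definition bilin ::
  "('k::field \<Rightarrow> 'a::ab_group_add \<Rightarrow> 'a) \<Rightarrow> ('k \<Rightarrow> 'b::ab_group_add \<Rightarrow> 'b) \<Rightarrow>
   ('k \<Rightarrow> 'c::ab_group_add \<Rightarrow> 'c) \<Rightarrow> ('a \<Rightarrow> 'b \<Rightarrow> 'c) \<Rightarrow> bool" where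
  "bilin sA sB sC f \<longleftrightarrow>
     (\<forall>x. Vector_Spaces.linear sB sC (f x)) \<and> (\<forall>y. Vector_Spaces.linear sA sC (\<lambda>x. f x y))"

definition trilin ::
  "('k::field \<Rightarrow> 'a::ab_group_add \<Rightarrow> 'a) \<Rightarrow> ('k \<Rightarrow> 'c::ab_group_add \<Rightarrow> 'c) \<Rightarrow>
   ('a \<Rightarrow> 'a \<Rightarrow> 'a \<Rightarrow> 'c) \<Rightarrow> bool" where
  "trilin sA sC f \<longleftrightarrow>
     (\<forall>y z. Vector_Spaces.linear sA sC (\<lambda>x. f x y z)) \<and>
     (\<forall>x z. Vector_Spaces.linear sA sC (\<lambda>y. f x y z)) \<and>
     (\<forall>x y. Vector_Spaces.linear sA sC (\<lambda>z. f x y z))"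

text \<open>Hom-Lie-Yamaguti algebra \<open>(T, br, tr, \<alpha>)\<close> over the scalar multiplication \<open>sT\<close>;
  \<open>br x y\<close> is \<open>[x,y]\<close> and \<open>tr x y z\<close> is \<open>[x,y,z]\<close>.\<close>

definition HLYA ::
  "('k::field \<Rightarrow> 't::ab_group_add \<Rightarrow> 't) \<Rightarrow> ('t \<Rightarrow> 't \<Rightarrow> 't) \<Rightarrow> ('t \<Rightarrow> 't \<Rightarrow> 't \<Rightarrow> 't)
   \<Rightarrow> ('t \<Rightarrow> 't) \<Rightarrow> bool" where
  "HLYA sT br tr \<alpha> \<longleftrightarrow>
    vector_space sT \<and> Vector_Spaces.linear sT sT \<alpha> \<and> bilin sT sT sT br \<and> trilin sT sT tr \<and>
    (\<forall>x1 x2. \<alpha> (br x1 x2) = br (\<alpha> x1) (\<alpha> x2)) \<and>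
    (\<forall>x1 x2 x3. \<alpha> (tr x1 x2 x3) = tr (\<alpha> x1) (\<alpha> x2) (\<alpha> x3)) \<and>
    (\<forall>x1 x2. br x1 x2 + br x2 x1 = 0) \<and>
    (\<forall>x1 x2 x3. tr x1 x2 x3 + tr x2 x1 x3 = 0) \<and>
    (\<forall>x1 x2 x3.
       (br (br x1 x2) (\<alpha> x3) + tr x1 x2 x3) + (br (br x2 x3) (\<alpha> x1) + tr x2 x3 x1)
       + (br (br x3 x1) (\<alpha> x2) + tr x3 x1 x2) = 0) \<and>
    (\<forall>x1 x2 x3 y1.
       tr (br x1 x2) (\<alpha> x3) (\<alpha> y1) + tr (br x2 x3) (\<alpha> x1) (\<alpha> y1)
       + tr (br x3 x1) (\<alpha> x2) (\<alpha> y1) = 0) \<and>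
    (\<forall>x1 x2 y1 y2.
       tr (\<alpha> x1) (\<alpha> x2) (br y1 y2)
       = br (tr x1 x2 y1) (\<alpha> (\<alpha> y2)) + br (\<alpha> (\<alpha> y1)) (tr x1 x2 y2)) \<and>
    (\<forall>x1 x2 y1 y2 y3.
       tr (\<alpha> (\<alpha> x1)) (\<alpha> (\<alpha> x2)) (tr y1 y2 y3)
       = tr (tr x1 x2 y1) (\<alpha> (\<alpha> y2)) (\<alpha> (\<alpha> y3))
         + tr (\<alpha> (\<alpha> y1)) (tr x1 x2 y2) (\<alpha> (\<alpha> y3))
         + tr (\<alpha> (\<alpha> y1)) (\<alpha> (\<alpha> y2)) (tr x1 x2 y3))"

text \<open>All identities are
  stated pointwise on \<open>v \<in> V\<close>.\<close>

definition HLYA_rep ::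
  "('k::field \<Rightarrow> 't::ab_group_add \<Rightarrow> 't) \<Rightarrow> ('t \<Rightarrow> 't \<Rightarrow> 't) \<Rightarrow> ('t \<Rightarrow> 't \<Rightarrow> 't \<Rightarrow> 't)
   \<Rightarrow> ('t \<Rightarrow> 't) \<Rightarrow> ('k \<Rightarrow> 'v::ab_group_add \<Rightarrow> 'v) \<Rightarrow> ('v \<Rightarrow> 'v)
   \<Rightarrow> ('t \<Rightarrow> 'v \<Rightarrow> 'v) \<Rightarrow> ('t \<Rightarrow> 't \<Rightarrow> 'v \<Rightarrow> 'v) \<Rightarrow> ('t \<Rightarrow> 't \<Rightarrow> 'v \<Rightarrow> 'v) \<Rightarrow> bool" where
  "HLYA_rep sT br tr \<alpha> sV \<beta> \<rho> D \<theta> \<longleftrightarrow>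
    vector_space sV \<and> Vector_Spaces.linear sV sV \<beta> \<and>
    (\<forall>x. Vector_Spaces.linear sV sV (\<rho> x)) \<and> (\<forall>v. Vector_Spaces.linear sT sV (\<lambda>x. \<rho> x v)) \<and>
    (\<forall>x y. Vector_Spaces.linear sV sV (D x y)) \<and> (\<forall>v. bilin sT sT sV (\<lambda>x y. D x y v)) \<and>
    (\<forall>x y. Vector_Spaces.linear sV sV (\<theta> x y)) \<and> (\<forall>v. bilin sT sT sV (\<lambda>x y. \<theta> x y v)) \<and>
    \<comment> \<open>HR01--HR03\<close>
    (\<forall>x1 v. \<rho> (\<alpha> x1) (\<beta> v) = \<beta> (\<rho> x1 v)) \<and>
    (\<forall>x1 x2 v. D (\<alpha> x1) (\<alpha> x2) (\<beta> v) = \<beta> (D x1 x2 v)) \<and>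
    (\<forall>x1 x2 v. \<theta> (\<alpha> x1) (\<alpha> x2) (\<beta> v) = \<beta> (\<theta> x1 x2 v)) \<and>
    \<comment> \<open>HR31\<close>
    (\<forall>x1 x2 v. D x1 x2 v - \<theta> x2 x1 v + \<theta> x1 x2 v + \<rho> (br x1 x2) (\<beta> v)
        - \<rho> (\<alpha> x1) (\<rho> x2 v) + \<rho> (\<alpha> x2) (\<rho> x1 v) = 0) \<and>
    \<comment> \<open>HR41\<close>
    (\<forall>x1 x2 x3 v. D (br x1 x2) (\<alpha> x3) v + D (br x2 x3) (\<alpha> x1) v + D (br x3 x1) (\<alpha> x2) v = 0) \<and>
    \<comment> \<open>HR42\<close>
    (\<forall>x1 x2 y1 v. \<theta> (br x1 x2) (\<alpha> y1) (\<beta> v)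
        = \<theta> (\<alpha> x1) (\<alpha> y1) (\<rho> x2 v) - \<theta> (\<alpha> x2) (\<alpha> y1) (\<rho> x1 v)) \<and>
    \<comment> \<open>HR51\<close>
    (\<forall>x1 x2 y2 v. D (\<alpha> x1) (\<alpha> x2) (\<rho> y2 v)
        = \<rho> (\<alpha> (\<alpha> y2)) (D x1 x2 v) + \<rho> (tr x1 x2 y2) (\<beta> (\<beta> v))) \<and>
    \<comment> \<open>HR52\<close>
    (\<forall>x1 y1 y2 v. \<theta> (\<alpha> x1) (br y1 y2) (\<beta> v)
        = \<rho> (\<alpha> (\<alpha> y1)) (\<theta> x1 y2 v) - \<rho> (\<alpha> (\<alpha> y2)) (\<theta> x1 y1 v)) \<and>
    \<comment> \<open>HR61\<close>
    (\<forall>x1 x2 y1 y2 v. D (\<alpha> (\<alpha> x1)) (\<alpha> (\<alpha> x2)) (\<theta> y1 y2 v)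
        = \<theta> (\<alpha> (\<alpha> y1)) (\<alpha> (\<alpha> y2)) (D x1 x2 v)
          + \<theta> (tr x1 x2 y1) (\<alpha> (\<alpha> y2)) (\<beta> (\<beta> v))
          + \<theta> (\<alpha> (\<alpha> y1)) (tr x1 x2 y2) (\<beta> (\<beta> v))) \<and>
    \<comment> \<open>HR62\<close>
    (\<forall>x1 y1 y2 y3 v. \<theta> (\<alpha> (\<alpha> x1)) (tr y1 y2 y3) (\<beta> (\<beta> v))
        = \<theta> (\<alpha> (\<alpha> y2)) (\<alpha> (\<alpha> y3)) (\<theta> x1 y1 v)
          - \<theta> (\<alpha> (\<alpha> y1)) (\<alpha> (\<alpha> y3)) (\<theta> x1 y2 v)
          + D (\<alpha> (\<alpha> y1)) (\<alpha> (\<alpha> y2)) (\<theta> x1 y3 v))"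

definition C2 ::
  "('k::field \<Rightarrow> 't::ab_group_add \<Rightarrow> 't) \<Rightarrow> ('t \<Rightarrow> 't) \<Rightarrow> ('k \<Rightarrow> 'v::ab_group_add \<Rightarrow> 'v)
   \<Rightarrow> ('v \<Rightarrow> 'v) \<Rightarrow> ('t \<Rightarrow> 't \<Rightarrow> 'v) set" where
  "C2 sT \<alpha> sV \<beta> = {\<nu>. bilin sT sT sV \<nu> \<and> (\<forall>x1 x2. \<nu> x1 x2 = - \<nu> x2 x1) \<and>
      (\<forall>x1 x2. \<nu> (\<alpha> x1) (\<alpha> x2) = \<beta> (\<nu> x1 x2))}"

definition C3 ::
  "('k::field \<Rightarrow> 't::ab_group_add \<Rightarrow> 't) \<Rightarrow> ('t \<Rightarrow> 't) \<Rightarrow> ('k \<Rightarrow> 'v::ab_group_add \<Rightarrow> 'v)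
   \<Rightarrow> ('v \<Rightarrow> 'v) \<Rightarrow> ('t \<Rightarrow> 't \<Rightarrow> 't \<Rightarrow> 'v) set" where
  "C3 sT \<alpha> sV \<beta> = {\<omega>. trilin sT sV \<omega> \<and> (\<forall>x1 x2 x3. \<omega> x1 x2 x3 = - \<omega> x2 x1 x3) \<and>
      (\<forall>x1 x2 x3. \<omega> (\<alpha> x1) (\<alpha> x2) (\<alpha> x3) = \<beta> (\<omega> x1 x2 x3))}"

definition Z23 ::
  "('k::field \<Rightarrow> 't::ab_group_add \<Rightarrow> 't) \<Rightarrow> ('t \<Rightarrow> 't \<Rightarrow> 't) \<Rightarrow> ('t \<Rightarrow> 't \<Rightarrow> 't \<Rightarrow> 't)
   \<Rightarrow> ('t \<Rightarrow> 't) \<Rightarrow> ('k \<Rightarrow> 'v::ab_group_add \<Rightarrow> 'v) \<Rightarrow> ('v \<Rightarrow> 'v)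
   \<Rightarrow> ('t \<Rightarrow> 'v \<Rightarrow> 'v) \<Rightarrow> ('t \<Rightarrow> 't \<Rightarrow> 'v \<Rightarrow> 'v) \<Rightarrow> ('t \<Rightarrow> 't \<Rightarrow> 'v \<Rightarrow> 'v)
   \<Rightarrow> (('t \<Rightarrow> 't \<Rightarrow> 'v) \<times> ('t \<Rightarrow> 't \<Rightarrow> 't \<Rightarrow> 'v)) set" where
  "Z23 sT br tr \<alpha> sV \<beta> \<rho> D \<theta> = {(\<nu>, \<omega>).
     \<nu> \<in> C2 sT \<alpha> sV \<beta> \<and> \<omega> \<in> C3 sT \<alpha> sV \<beta> \<and>
     \<comment> \<open>CC1\<close>
     (\<forall>x1 x2 x3.
        (\<omega> x1 x2 x3 - \<rho> (\<alpha> x1) (\<nu> x2 x3) + \<nu> (br x1 x2) (\<alpha> x3))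
      + (\<omega> x2 x3 x1 - \<rho> (\<alpha> x2) (\<nu> x3 x1) + \<nu> (br x2 x3) (\<alpha> x1))
      + (\<omega> x3 x1 x2 - \<rho> (\<alpha> x3) (\<nu> x1 x2) + \<nu> (br x3 x1) (\<alpha> x2)) = 0) \<and>
     \<comment> \<open>CC2\<close>
     (\<forall>x1 x2 x3 y1.
        (\<theta> (\<alpha> x1) (\<alpha> y1) (\<nu> x2 x3) + \<omega> (br x1 x2) (\<alpha> x3) (\<alpha> y1))
      + (\<theta> (\<alpha> x2) (\<alpha> y1) (\<nu> x3 x1) + \<omega> (br x2 x3) (\<alpha> x1) (\<alpha> y1))
      + (\<theta> (\<alpha> x3) (\<alpha> y1) (\<nu> x1 x2) + \<omega> (br x3 x1) (\<alpha> x2) (\<alpha> y1)) = 0) \<and>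
     \<comment> \<open>CC3\<close>
     (\<forall>x1 x2 y1 y2.
        \<omega> (\<alpha> x1) (\<alpha> x2) (br y1 y2) + D (\<alpha> x1) (\<alpha> x2) (\<nu> y1 y2)
      = \<nu> (tr x1 x2 y1) (\<alpha> (\<alpha> y2)) + \<nu> (\<alpha> (\<alpha> y1)) (tr x1 x2 y2)
        + \<rho> (\<alpha> (\<alpha> y1)) (\<omega> x1 x2 y2) - \<rho> (\<alpha> (\<alpha> y2)) (\<omega> x1 x2 y1)) \<and>
     \<comment> \<open>CC4\<close>
     (\<forall>x1 x2 y1 y2 y3.
        \<omega> (\<alpha> (\<alpha> x1)) (\<alpha> (\<alpha> x2)) (tr y1 y2 y3) + D (\<alpha> (\<alpha> x1)) (\<alpha> (\<alpha> x2)) (\<omega> y1 y2 y3)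
      = \<omega> (tr x1 x2 y1) (\<alpha> (\<alpha> y2)) (\<alpha> (\<alpha> y3))
        + \<omega> (\<alpha> (\<alpha> y1)) (tr x1 x2 y2) (\<alpha> (\<alpha> y3))
        + \<omega> (\<alpha> (\<alpha> y1)) (\<alpha> (\<alpha> y2)) (tr x1 x2 y3)
        + \<theta> (\<alpha> (\<alpha> y2)) (\<alpha> (\<alpha> y3)) (\<omega> x1 x2 y1)
        - \<theta> (\<alpha> (\<alpha> y1)) (\<alpha> (\<alpha> y3)) (\<omega> x1 x2 y2)
        + D (\<alpha> (\<alpha> y1)) (\<alpha> (\<alpha> y2)) (\<omega> x1 x2 y3))}"

definition B23 ::
  "('k::field \<Rightarrow> 't::ab_group_add \<Rightarrow> 't) \<Rightarrow> ('t \<Rightarrow> 't \<Rightarrow> 't) \<Rightarrow> ('t \<Rightarrow> 't \<Rightarrow> 't \<Rightarrow> 't)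
   \<Rightarrow> ('t \<Rightarrow> 't) \<Rightarrow> ('k \<Rightarrow> 'v::ab_group_add \<Rightarrow> 'v) \<Rightarrow> ('v \<Rightarrow> 'v)
   \<Rightarrow> ('t \<Rightarrow> 'v \<Rightarrow> 'v) \<Rightarrow> ('t \<Rightarrow> 't \<Rightarrow> 'v \<Rightarrow> 'v) \<Rightarrow> ('t \<Rightarrow> 't \<Rightarrow> 'v \<Rightarrow> 'v)
   \<Rightarrow> (('t \<Rightarrow> 't \<Rightarrow> 'v) \<times> ('t \<Rightarrow> 't \<Rightarrow> 't \<Rightarrow> 'v)) set" where
  "B23 sT br tr \<alpha> sV \<beta> \<rho> D \<theta> = {(\<nu>, \<omega>).
     \<nu> \<in> C2 sT \<alpha> sV \<beta> \<and> \<omega> \<in> C3 sT \<alpha> sV \<beta> \<and>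
     (\<exists>f. Vector_Spaces.linear sT sV f \<and>
        (\<forall>x. f (\<alpha> x) = \<beta> (f x)) \<and>
        (\<forall>x1 x2. \<nu> x1 x2 = \<rho> x1 (f x2) - \<rho> x2 (f x1) - f (br x1 x2)) \<and>
        (\<forall>x1 x2 x3. \<omega> x1 x2 x3 = \<theta> x2 x3 (f x1) - \<theta> x1 x3 (f x2) + D x1 x2 (f x3)
                                   - f (tr x1 x2 x3)))}"

end

(*
  For a cochain map f (linear, with f \<circ> \<alpha> = \<beta> \<circ> f), expanding each cocycle condition
  CC1-CC4 for (\<delta>f, \<delta>f) leaves a signed sum of defects of the axioms: HLY3-HLY6 pushed
  through f, and the representation identities HR31-HR62 evaluated at values of f.
  CC4 also needs the D-analogue of HR61, which is not an axiom but a consequence of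
  HR31, HR51 and HR61.
*)

theory Submission imports Defs begin

lemmas linear_simps =
  module_hom.add[OF module_hom_linearI] module_hom.diff[OF module_hom_linearI]
  module_hom.neg[OF module_hom_linearI] module_hom.zero[OF module_hom_linearI]

locale HLYA_representation =
  fixes sT :: "'k::field \<Rightarrow> 't::ab_group_add \<Rightarrow> 't"
    and br :: "'t \<Rightarrow> 't \<Rightarrow> 't" and tr :: "'t \<Rightarrow> 't \<Rightarrow> 't \<Rightarrow> 't" and \<alpha> :: "'t \<Rightarrow> 't"
    and sV :: "'k \<Rightarrow> 'v::ab_group_add \<Rightarrow> 'v" and \<beta> :: "'v \<Rightarrow> 'v"
    and \<rho> :: "'t \<Rightarrow> 'v \<Rightarrow> 'v" and D \<theta> :: "'t \<Rightarrow> 't \<Rightarrow> 'v \<Rightarrow> 'v"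
  assumes HLYA: "HLYA sT br tr \<alpha>"
    and rep: "HLYA_rep sT br tr \<alpha> sV \<beta> \<rho> D \<theta>"
begin

lemma hly01: "\<alpha> (br x1 x2) = br (\<alpha> x1) (\<alpha> x2)"
  using HLYA unfolding HLYA_def by metis

lemma hly02: "\<alpha> (tr x1 x2 x3) = tr (\<alpha> x1) (\<alpha> x2) (\<alpha> x3)"
  using HLYA unfolding HLYA_def by metis

lemma hly3:
  "(br (br x1 x2) (\<alpha> x3) + tr x1 x2 x3) + (br (br x2 x3) (\<alpha> x1) + tr x2 x3 x1)
     + (br (br x3 x1) (\<alpha> x2) + tr x3 x1 x2) = 0"
  using HLYA unfolding HLYA_def by metis

lemma hly4:
  "tr (br x1 x2) (\<alpha> x3) (\<alpha> y1) + tr (br x2 x3) (\<alpha> x1) (\<alpha> y1)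
     + tr (br x3 x1) (\<alpha> x2) (\<alpha> y1) = 0"
  using HLYA unfolding HLYA_def by metis

lemma hly5:
  "tr (\<alpha> x1) (\<alpha> x2) (br y1 y2)
     = br (tr x1 x2 y1) (\<alpha> (\<alpha> y2)) + br (\<alpha> (\<alpha> y1)) (tr x1 x2 y2)"
  using HLYA unfolding HLYA_def by metis

lemma hly6:
  "tr (\<alpha> (\<alpha> x1)) (\<alpha> (\<alpha> x2)) (tr y1 y2 y3)
     = tr (tr x1 x2 y1) (\<alpha> (\<alpha> y2)) (\<alpha> (\<alpha> y3))
       + tr (\<alpha> (\<alpha> y1)) (tr x1 x2 y2) (\<alpha> (\<alpha> y3))
       + tr (\<alpha> (\<alpha> y1)) (\<alpha> (\<alpha> y2)) (tr x1 x2 y3)"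
  using HLYA unfolding HLYA_def by metis

lemma linear_rep_maps:
  "Vector_Spaces.linear sV sV \<beta>" "Vector_Spaces.linear sV sV (\<rho> x)"
  "Vector_Spaces.linear sV sV (D x y)" "Vector_Spaces.linear sV sV (\<theta> x y)"
  using rep unfolding HLYA_rep_def by simp_all

lemmas rep_linear_simps =
  linear_simps[OF linear_rep_maps(1)] linear_simps[OF linear_rep_maps(2)]
  linear_simps[OF linear_rep_maps(3)] linear_simps[OF linear_rep_maps(4)]

lemma rho_add_left: "\<rho> (x + y) v = \<rho> x v + \<rho> y v"
proof -
  have "Vector_Spaces.linear sT sV (\<lambda>x. \<rho> x v)"
    using rep unfolding HLYA_rep_def by simp
  from linear_simps(1)[OF this] show ?thesis .
qed

lemma
  shows hr01: "\<rho> (\<alpha> x1) (\<beta> v) = \<beta> (\<rho> x1 v)"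
    and hr02: "D (\<alpha> x1) (\<alpha> x2) (\<beta> v) = \<beta> (D x1 x2 v)"
    and hr03: "\<theta> (\<alpha> x1) (\<alpha> x2) (\<beta> v) = \<beta> (\<theta> x1 x2 v)"
  using rep unfolding HLYA_rep_def by simp_all

lemma hr31:
  "D x1 x2 v - \<theta> x2 x1 v + \<theta> x1 x2 v + \<rho> (br x1 x2) (\<beta> v)
     - \<rho> (\<alpha> x1) (\<rho> x2 v) + \<rho> (\<alpha> x2) (\<rho> x1 v) = 0"
  using rep unfolding HLYA_rep_def by metis

lemma hr41: "D (br x1 x2) (\<alpha> x3) v + D (br x2 x3) (\<alpha> x1) v + D (br x3 x1) (\<alpha> x2) v = 0"
  using rep unfolding HLYA_rep_def by metis

lemma hr42:
  "\<theta> (br x1 x2) (\<alpha> y1) (\<beta> v) = \<theta> (\<alpha> x1) (\<alpha> y1) (\<rho> x2 v) - \<theta> (\<alpha> x2) (\<alpha> y1) (\<rho> x1 v)"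
  using rep unfolding HLYA_rep_def by metis

lemma hr51:
  "D (\<alpha> x1) (\<alpha> x2) (\<rho> y2 v) = \<rho> (\<alpha> (\<alpha> y2)) (D x1 x2 v) + \<rho> (tr x1 x2 y2) (\<beta> (\<beta> v))"
  using rep unfolding HLYA_rep_def by metis

lemma hr52:
  "\<theta> (\<alpha> x1) (br y1 y2) (\<beta> v) = \<rho> (\<alpha> (\<alpha> y1)) (\<theta> x1 y2 v) - \<rho> (\<alpha> (\<alpha> y2)) (\<theta> x1 y1 v)"
  using rep unfolding HLYA_rep_def by metis

lemma hr61:
  "D (\<alpha> (\<alpha> x1)) (\<alpha> (\<alpha> x2)) (\<theta> y1 y2 v)
     = \<theta> (\<alpha> (\<alpha> y1)) (\<alpha> (\<alpha> y2)) (D x1 x2 v)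
       + \<theta> (tr x1 x2 y1) (\<alpha> (\<alpha> y2)) (\<beta> (\<beta> v))
       + \<theta> (\<alpha> (\<alpha> y1)) (tr x1 x2 y2) (\<beta> (\<beta> v))"
  using rep unfolding HLYA_rep_def by metis

lemma hr62:
  "\<theta> (\<alpha> (\<alpha> x1)) (tr y1 y2 y3) (\<beta> (\<beta> v))
     = \<theta> (\<alpha> (\<alpha> y2)) (\<alpha> (\<alpha> y3)) (\<theta> x1 y1 v)
       - \<theta> (\<alpha> (\<alpha> y1)) (\<alpha> (\<alpha> y3)) (\<theta> x1 y2 v)
       + D (\<alpha> (\<alpha> y1)) (\<alpha> (\<alpha> y2)) (\<theta> x1 y3 v)"
  using rep unfolding HLYA_rep_def by metis

lemma D_eq_hr31:
  "D x y v = \<theta> y x v - \<theta> x y v - \<rho> (br x y) (\<beta> v) + \<rho> (\<alpha> x) (\<rho> y v) - \<rho> (\<alpha> y) (\<rho> x v)"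
  using hr31[of x y v] by (simp add: algebra_simps eq_neg_iff_add_eq_0)

(* Expand every D by HR31: the \<theta>-terms are then matched by HR61, the \<rho>-terms by HR51 and HLY5. *)
lemma D_D_derivation:
  "D (\<alpha> (\<alpha> a)) (\<alpha> (\<alpha> b)) (D y1 y2 v)
     = D (\<alpha> (\<alpha> y1)) (\<alpha> (\<alpha> y2)) (D a b v)
       + D (tr a b y1) (\<alpha> (\<alpha> y2)) (\<beta> (\<beta> v)) + D (\<alpha> (\<alpha> y1)) (tr a b y2) (\<beta> (\<beta> v))"
  by (simp add: D_eq_hr31[of y1 y2 v] D_eq_hr31[of "\<alpha> (\<alpha> y1)" "\<alpha> (\<alpha> y2)" "D a b v"]
      D_eq_hr31[of "tr a b y1" "\<alpha> (\<alpha> y2)" "\<beta> (\<beta> v)"] D_eq_hr31[of "\<alpha> (\<alpha> y1)" "tr a b y2" "\<beta> (\<beta> v)"]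
      hr61[of a b y2 y1 v] hr61[of a b y1 y2 v] hr51[of "\<alpha> a" "\<alpha> b" "br y1 y2" "\<beta> v"]
      hr51[of "\<alpha> a" "\<alpha> b" "\<alpha> y1" "\<rho> y2 v"] hr51[of a b y2 v]
      hr51[of "\<alpha> a" "\<alpha> b" "\<alpha> y2" "\<rho> y1 v"] hr51[of a b y1 v]
      rep_linear_simps rho_add_left hr01 hr02 hr03 hly01 hly02 hly5 algebra_simps)

definition coboundary2 :: "('t \<Rightarrow> 'v) \<Rightarrow> 't \<Rightarrow> 't \<Rightarrow> 'v" where
  "coboundary2 f x1 x2 = \<rho> x1 (f x2) - \<rho> x2 (f x1) - f (br x1 x2)"

definition coboundary3 :: "('t \<Rightarrow> 'v) \<Rightarrow> 't \<Rightarrow> 't \<Rightarrow> 't \<Rightarrow> 'v" where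
  "coboundary3 f x1 x2 x3 = \<theta> x2 x3 (f x1) - \<theta> x1 x3 (f x2) + D x1 x2 (f x3) - f (tr x1 x2 x3)"

context
  fixes f :: "'t \<Rightarrow> 'v"
  assumes linear_f: "Vector_Spaces.linear sT sV f"
    and f_hom: "\<And>x. f (\<alpha> x) = \<beta> (f x)"
begin

lemmas f_simps = linear_simps[OF linear_f] f_hom

lemma coboundary_cc1:
  "(coboundary3 f x1 x2 x3 - \<rho> (\<alpha> x1) (coboundary2 f x2 x3) + coboundary2 f (br x1 x2) (\<alpha> x3))
   + (coboundary3 f x2 x3 x1 - \<rho> (\<alpha> x2) (coboundary2 f x3 x1) + coboundary2 f (br x2 x3) (\<alpha> x1))
   + (coboundary3 f x3 x1 x2 - \<rho> (\<alpha> x3) (coboundary2 f x1 x2) + coboundary2 f (br x3 x1) (\<alpha> x2))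
   = 0" (is "?L = 0")
proof -
  have "?L =
      (D x1 x2 (f x3) - \<theta> x2 x1 (f x3) + \<theta> x1 x2 (f x3) + \<rho> (br x1 x2) (\<beta> (f x3))
        - \<rho> (\<alpha> x1) (\<rho> x2 (f x3)) + \<rho> (\<alpha> x2) (\<rho> x1 (f x3)))
    + (D x2 x3 (f x1) - \<theta> x3 x2 (f x1) + \<theta> x2 x3 (f x1) + \<rho> (br x2 x3) (\<beta> (f x1))
        - \<rho> (\<alpha> x2) (\<rho> x3 (f x1)) + \<rho> (\<alpha> x3) (\<rho> x2 (f x1)))
    + (D x3 x1 (f x2) - \<theta> x1 x3 (f x2) + \<theta> x3 x1 (f x2) + \<rho> (br x3 x1) (\<beta> (f x2))
        - \<rho> (\<alpha> x3) (\<rho> x1 (f x2)) + \<rho> (\<alpha> x1) (\<rho> x3 (f x2)))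
    - f ((br (br x1 x2) (\<alpha> x3) + tr x1 x2 x3) + (br (br x2 x3) (\<alpha> x1) + tr x2 x3 x1)
       + (br (br x3 x1) (\<alpha> x2) + tr x3 x1 x2))"
    by (simp add: coboundary2_def coboundary3_def f_simps rep_linear_simps algebra_simps)
  also have "\<dots> = 0"
    by (simp only: hr31 hly3 f_simps) simp
  finally show ?thesis .
qed

lemma coboundary_cc2:
  "(\<theta> (\<alpha> x1) (\<alpha> y1) (coboundary2 f x2 x3) + coboundary3 f (br x1 x2) (\<alpha> x3) (\<alpha> y1))
   + (\<theta> (\<alpha> x2) (\<alpha> y1) (coboundary2 f x3 x1) + coboundary3 f (br x2 x3) (\<alpha> x1) (\<alpha> y1))
   + (\<theta> (\<alpha> x3) (\<alpha> y1) (coboundary2 f x1 x2) + coboundary3 f (br x3 x1) (\<alpha> x2) (\<alpha> y1))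
   = 0" (is "?L = 0")
proof -
  have "?L =
      (D (br x1 x2) (\<alpha> x3) (\<beta> (f y1)) + D (br x2 x3) (\<alpha> x1) (\<beta> (f y1))
        + D (br x3 x1) (\<alpha> x2) (\<beta> (f y1)))
    - (\<theta> (br x1 x2) (\<alpha> y1) (\<beta> (f x3))
        - (\<theta> (\<alpha> x1) (\<alpha> y1) (\<rho> x2 (f x3)) - \<theta> (\<alpha> x2) (\<alpha> y1) (\<rho> x1 (f x3))))
    - (\<theta> (br x2 x3) (\<alpha> y1) (\<beta> (f x1))
        - (\<theta> (\<alpha> x2) (\<alpha> y1) (\<rho> x3 (f x1)) - \<theta> (\<alpha> x3) (\<alpha> y1) (\<rho> x2 (f x1))))
    - (\<theta> (br x3 x1) (\<alpha> y1) (\<beta> (f x2))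
        - (\<theta> (\<alpha> x3) (\<alpha> y1) (\<rho> x1 (f x2)) - \<theta> (\<alpha> x1) (\<alpha> y1) (\<rho> x3 (f x2))))
    - f (tr (br x1 x2) (\<alpha> x3) (\<alpha> y1) + tr (br x2 x3) (\<alpha> x1) (\<alpha> y1)
       + tr (br x3 x1) (\<alpha> x2) (\<alpha> y1))"
    by (simp add: coboundary2_def coboundary3_def f_simps rep_linear_simps algebra_simps)
  also have "\<dots> = 0"
    by (simp only: hr41 hr42 hly4 f_simps) simp
  finally show ?thesis .
qed

lemma coboundary_cc3:
  "coboundary3 f (\<alpha> x1) (\<alpha> x2) (br y1 y2) + D (\<alpha> x1) (\<alpha> x2) (coboundary2 f y1 y2)
   = coboundary2 f (tr x1 x2 y1) (\<alpha> (\<alpha> y2)) + coboundary2 f (\<alpha> (\<alpha> y1)) (tr x1 x2 y2)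
     + \<rho> (\<alpha> (\<alpha> y1)) (coboundary3 f x1 x2 y2) - \<rho> (\<alpha> (\<alpha> y2)) (coboundary3 f x1 x2 y1)"
  (is "?L = ?R")
proof -
  have "?L - ?R =
      (\<theta> (\<alpha> x2) (br y1 y2) (\<beta> (f x1))
        - (\<rho> (\<alpha> (\<alpha> y1)) (\<theta> x2 y2 (f x1)) - \<rho> (\<alpha> (\<alpha> y2)) (\<theta> x2 y1 (f x1))))
    - (\<theta> (\<alpha> x1) (br y1 y2) (\<beta> (f x2))
        - (\<rho> (\<alpha> (\<alpha> y1)) (\<theta> x1 y2 (f x2)) - \<rho> (\<alpha> (\<alpha> y2)) (\<theta> x1 y1 (f x2))))
    + (D (\<alpha> x1) (\<alpha> x2) (\<rho> y1 (f y2))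
        - (\<rho> (\<alpha> (\<alpha> y1)) (D x1 x2 (f y2)) + \<rho> (tr x1 x2 y1) (\<beta> (\<beta> (f y2)))))
    - (D (\<alpha> x1) (\<alpha> x2) (\<rho> y2 (f y1))
        - (\<rho> (\<alpha> (\<alpha> y2)) (D x1 x2 (f y1)) + \<rho> (tr x1 x2 y2) (\<beta> (\<beta> (f y1)))))
    - f (tr (\<alpha> x1) (\<alpha> x2) (br y1 y2)
        - (br (tr x1 x2 y1) (\<alpha> (\<alpha> y2)) + br (\<alpha> (\<alpha> y1)) (tr x1 x2 y2)))"
    by (simp add: coboundary2_def coboundary3_def f_simps rep_linear_simps algebra_simps)
  also have "\<dots> = 0"
    by (simp only: hr51 hr52 hly5 f_simps) simp
  finally show ?thesis by simp
qed

lemma coboundary_cc4: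
  "coboundary3 f (\<alpha> (\<alpha> x1)) (\<alpha> (\<alpha> x2)) (tr y1 y2 y3)
     + D (\<alpha> (\<alpha> x1)) (\<alpha> (\<alpha> x2)) (coboundary3 f y1 y2 y3)
   = coboundary3 f (tr x1 x2 y1) (\<alpha> (\<alpha> y2)) (\<alpha> (\<alpha> y3))
     + coboundary3 f (\<alpha> (\<alpha> y1)) (tr x1 x2 y2) (\<alpha> (\<alpha> y3))
     + coboundary3 f (\<alpha> (\<alpha> y1)) (\<alpha> (\<alpha> y2)) (tr x1 x2 y3)
     + \<theta> (\<alpha> (\<alpha> y2)) (\<alpha> (\<alpha> y3)) (coboundary3 f x1 x2 y1)
     - \<theta> (\<alpha> (\<alpha> y1)) (\<alpha> (\<alpha> y3)) (coboundary3 f x1 x2 y2)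
     + D (\<alpha> (\<alpha> y1)) (\<alpha> (\<alpha> y2)) (coboundary3 f x1 x2 y3)"
  (is "?L = ?R")
proof -
  have "?L - ?R =
      (D (\<alpha> (\<alpha> x1)) (\<alpha> (\<alpha> x2)) (\<theta> y2 y3 (f y1))
        - (\<theta> (\<alpha> (\<alpha> y2)) (\<alpha> (\<alpha> y3)) (D x1 x2 (f y1))
          + \<theta> (tr x1 x2 y2) (\<alpha> (\<alpha> y3)) (\<beta> (\<beta> (f y1)))
          + \<theta> (\<alpha> (\<alpha> y2)) (tr x1 x2 y3) (\<beta> (\<beta> (f y1)))))
    - (D (\<alpha> (\<alpha> x1)) (\<alpha> (\<alpha> x2)) (\<theta> y1 y3 (f y2))
        - (\<theta> (\<alpha> (\<alpha> y1)) (\<alpha> (\<alpha> y3)) (D x1 x2 (f y2))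
          + \<theta> (tr x1 x2 y1) (\<alpha> (\<alpha> y3)) (\<beta> (\<beta> (f y2)))
          + \<theta> (\<alpha> (\<alpha> y1)) (tr x1 x2 y3) (\<beta> (\<beta> (f y2)))))
    + (D (\<alpha> (\<alpha> x1)) (\<alpha> (\<alpha> x2)) (D y1 y2 (f y3))
        - (D (\<alpha> (\<alpha> y1)) (\<alpha> (\<alpha> y2)) (D x1 x2 (f y3))
          + D (tr x1 x2 y1) (\<alpha> (\<alpha> y2)) (\<beta> (\<beta> (f y3)))
          + D (\<alpha> (\<alpha> y1)) (tr x1 x2 y2) (\<beta> (\<beta> (f y3)))))
    + (\<theta> (\<alpha> (\<alpha> x2)) (tr y1 y2 y3) (\<beta> (\<beta> (f x1)))
        - (\<theta> (\<alpha> (\<alpha> y2)) (\<alpha> (\<alpha> y3)) (\<theta> x2 y1 (f x1))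
          - \<theta> (\<alpha> (\<alpha> y1)) (\<alpha> (\<alpha> y3)) (\<theta> x2 y2 (f x1))
          + D (\<alpha> (\<alpha> y1)) (\<alpha> (\<alpha> y2)) (\<theta> x2 y3 (f x1))))
    - (\<theta> (\<alpha> (\<alpha> x1)) (tr y1 y2 y3) (\<beta> (\<beta> (f x2)))
        - (\<theta> (\<alpha> (\<alpha> y2)) (\<alpha> (\<alpha> y3)) (\<theta> x1 y1 (f x2))
          - \<theta> (\<alpha> (\<alpha> y1)) (\<alpha> (\<alpha> y3)) (\<theta> x1 y2 (f x2))
          + D (\<alpha> (\<alpha> y1)) (\<alpha> (\<alpha> y2)) (\<theta> x1 y3 (f x2))))
    - f (tr (\<alpha> (\<alpha> x1)) (\<alpha> (\<alpha> x2)) (tr y1 y2 y3)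
        - (tr (tr x1 x2 y1) (\<alpha> (\<alpha> y2)) (\<alpha> (\<alpha> y3))
           + tr (\<alpha> (\<alpha> y1)) (tr x1 x2 y2) (\<alpha> (\<alpha> y3))
           + tr (\<alpha> (\<alpha> y1)) (\<alpha> (\<alpha> y2)) (tr x1 x2 y3)))"
    by (simp add: coboundary2_def coboundary3_def f_simps rep_linear_simps algebra_simps)
  also have "\<dots> = 0"
    by (simp only: hr61[of x1 x2 y2 y3] hr61[of x1 x2 y1 y3] hr62[of x2 y1 y2 y3]
        hr62[of x1 y1 y2 y3] D_D_derivation[of x1 x2 y1 y2] hly6[of x1 x2 y1 y2 y3] f_simps) simp
  finally show ?thesis by simp
qed

end

end

theorem proposition2p11:
  fixes sT :: "'k::field \<Rightarrow> 't::ab_group_add \<Rightarrow> 't"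
    and br :: "'t \<Rightarrow> 't \<Rightarrow> 't" and tr :: "'t \<Rightarrow> 't \<Rightarrow> 't \<Rightarrow> 't" and \<alpha> :: "'t \<Rightarrow> 't"
    and sV :: "'k \<Rightarrow> 'v::ab_group_add \<Rightarrow> 'v" and \<beta> :: "'v \<Rightarrow> 'v"
    and \<rho> :: "'t \<Rightarrow> 'v \<Rightarrow> 'v" and D \<theta> :: "'t \<Rightarrow> 't \<Rightarrow> 'v \<Rightarrow> 'v"
  assumes "alg_closed_field TYPE('k)"
    and "char_not_2_3 TYPE('k)"
    and "HLYA sT br tr \<alpha>"
    and "HLYA_rep sT br tr \<alpha> sV \<beta> \<rho> D \<theta>"
  shows "B23 sT br tr \<alpha> sV \<beta> \<rho> D \<theta> \<subseteq> Z23 sT br tr \<alpha> sV \<beta> \<rho> D \<theta>"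
proof
  interpret HLYA_representation sT br tr \<alpha> sV \<beta> \<rho> D \<theta>
    using assms(3,4) by unfold_locales
  fix p
  assume "p \<in> B23 sT br tr \<alpha> sV \<beta> \<rho> D \<theta>"
  then obtain \<nu> \<omega> f where p: "p = (\<nu>, \<omega>)"
    and cochains: "\<nu> \<in> C2 sT \<alpha> sV \<beta>" "\<omega> \<in> C3 sT \<alpha> sV \<beta>"
    and f: "Vector_Spaces.linear sT sV f" "\<And>x. f (\<alpha> x) = \<beta> (f x)"
    and \<nu>: "\<And>x1 x2. \<nu> x1 x2 = coboundary2 f x1 x2"
    and \<omega>: "\<And>x1 x2 x3. \<omega> x1 x2 x3 = coboundary3 f x1 x2 x3"
    unfolding B23_def coboundary2_def coboundary3_def by blast
  have "\<nu> = coboundary2 f" "\<omega> = coboundary3 f"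
    using \<nu> \<omega> by blast+
  with cochains show "p \<in> Z23 sT br tr \<alpha> sV \<beta> \<rho> D \<theta>"
    unfolding p Z23_def
    using coboundary_cc1[OF f] coboundary_cc2[OF f] coboundary_cc3[OF f] coboundary_cc4[OF f]
    by simp
qed

end
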